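(* Let $S$ be an additively cancellative centrally essential semiring without non-zero zero-divisors, and let $D(S)$ be its ring of differences. If the ring $D(S)$ has no non-zero zero-divisors, then $S$ is commutative.
   Context: A semiring is a set $S$ with two binary operations $+$ and $\cdot$ such that $(S,+)$ is a commutative monoid with neutral element $0$, $(S,\cdot)$ is a monoid with identity $1$, multiplication distributes over addition on both sides, and $0s=s0=0$ for all $s\in S$. The center is $C(S)=\{s\in S: ss'=s's \text{ for all } s'\in S\}$. $S$ is centrally essential if for every non-zero $x\in S$ there exist non-zero $y,z\in C(S)$ with $xy=z$. $S$ is additively cancellative if $x+z=y+z$ implies $x=y$; such $S$ embeds as a subsemiring in a ring $D(S)$ (ring of differences) in which every element is $x-y$ with $x,y\in S$. An element $a$ is a zero-divisor if $ab=0$ or $ba=0$ for some non-zero $b$. *)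

theory Defs
  imports Main
begin

text \<open>Semirings in the sense of the paper: commutative additive monoid, multiplicative
monoid, two-sided distributivity, absorbing zero. In Isabelle this is the type class
combination semiring_0 + monoid_mult (we avoid semiring_1, which would force 0 \<noteq> 1).\<close>

definition center :: "'a::{semiring_0,monoid_mult} set" where
  "center = {s. \<forall>s'. s * s' = s' * s}"

definition centrally_essential :: "'a::{semiring_0,monoid_mult} itself \<Rightarrow> bool" where
  "centrally_essential _ \<longleftrightarrow>
     (\<forall>x::'a. x \<noteq> 0 \<longrightarrow> (\<exists>y z. y \<in> center \<and> z \<in> center \<and> y \<noteq> 0 \<and> z \<noteq> 0 \<and> x * y = z))"

definition add_cancellative :: "'a::{semiring_0,monoid_mult} itself \<Rightarrow> bool" where
  "add_cancellative _ \<longleftrightarrow> (\<forall>x y z::'a. x + z = y + z \<longrightarrow> x = y)"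

definition zero_divisor :: "'a::{times,zero} \<Rightarrow> bool" where
  "zero_divisor a \<longleftrightarrow> (\<exists>b. b \<noteq> 0 \<and> (a * b = 0 \<or> b * a = 0))"

definition no_nonzero_zero_divisors :: "'a::{times,zero} itself \<Rightarrow> bool" where
  "no_nonzero_zero_divisors _ \<longleftrightarrow> (\<forall>a::'a. a \<noteq> 0 \<longrightarrow> \<not> zero_divisor a)"

definition ring_of_differences ::
  "('a::{semiring_0,monoid_mult} \<Rightarrow> 'b::{ring,monoid_mult}) \<Rightarrow> bool" where
  "ring_of_differences f \<longleftrightarrow>
     inj f \<and> f 0 = 0 \<and> f 1 = 1 \<and>
     (\<forall>x y. f (x + y) = f x + f y) \<and> (\<forall>x y. f (x * y) = f x * f y) \<and>
     (\<forall>r. \<exists>x y. r = f x - f y)"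

end

theory Submission
  imports Defs
begin

text \<open>Given \<open>x \<noteq> 0\<close>, central essentiality yields a central \<open>y \<noteq> 0\<close> with \<open>x y\<close> central, whence
  \<open>x s y = (x y) s = s (x y) = s x y\<close> for every \<open>s\<close>. Inside \<open>D(S)\<close>, which has no zero-divisors,
  the factor \<open>y\<close> can be cancelled, so \<open>x s = s x\<close>.\<close>

lemma center_mult_right_commute:
  fixes x y s :: "'a::{semiring_0,monoid_mult}"
  assumes "y \<in> center" and "x * y \<in> center"
  shows "x * s * y = s * x * y"
proof -
  have "x * s * y = x * y * s"
    using assms(1) unfolding center_def by (simp add: mult.assoc)
  also have "\<dots> = s * (x * y)"
    using assms(2) unfolding center_def by simp
  finally show ?thesis by (simp add: mult.assoc)
qed

lemma mult_right_cancel_no_zero_divisors: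
  fixes a b c :: "'b::ring"
  assumes "no_nonzero_zero_divisors TYPE('b)" and "c \<noteq> 0" and "a * c = b * c"
  shows "a = b"
proof (rule ccontr)
  assume "a \<noteq> b"
  then have "\<not> zero_divisor (a - b)"
    using assms(1) unfolding no_nonzero_zero_divisors_def by simp
  moreover have "(a - b) * c = 0"
    using assms(3) by (simp add: algebra_simps)
  ultimately show False
    using assms(2) unfolding zero_divisor_def by blast
qed

lemma ring_of_differences_mult_right_cancel:
  fixes f :: "'a::{semiring_0,monoid_mult} \<Rightarrow> 'b::{ring,monoid_mult}"
    and a b c :: 'a
  assumes "ring_of_differences f" and "no_nonzero_zero_divisors TYPE('b)"
    and "c \<noteq> 0" and "a * c = b * c"
  shows "a = b"
proof -
  have inj: "inj f" and "f 0 = 0" and f_mult: "\<And>u v. f (u * v) = f u * f v"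
    using assms(1) unfolding ring_of_differences_def by auto
  then have "f c \<noteq> 0"
    using assms(3) by (metis injD)
  moreover have "f a * f c = f b * f c"
    using assms(4) by (simp flip: f_mult)
  ultimately have "f a = f b"
    by (rule mult_right_cancel_no_zero_divisors[OF assms(2)])
  then show ?thesis
    using inj by (simp add: inj_eq)
qed

theorem proposition2p8:
  fixes f :: "'a::{semiring_0,monoid_mult} \<Rightarrow> 'b::{ring,monoid_mult}"
  assumes "add_cancellative TYPE('a)"
    and "centrally_essential TYPE('a)"
    and "no_nonzero_zero_divisors TYPE('a)"
    and "ring_of_differences f"
    and "no_nonzero_zero_divisors TYPE('b)"
  shows "\<forall>x y :: 'a. x * y = y * x"
proof (intro allI)
  fix x s :: 'a
  show "x * s = s * x"
  proof (cases "x = 0")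
    case True
    then show ?thesis by simp
  next
    case False
    then obtain y where "y \<in> center" "y \<noteq> 0" "x * y \<in> center"
      using assms(2) unfolding centrally_essential_def by blast
    then show ?thesis
      using ring_of_differences_mult_right_cancel[OF assms(4,5)] center_mult_right_commute
      by blast
  qed
qed

end
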